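(* Let $\mathcal Y\subset\mathbb R^d$ be finite with no element a strict convex combination of others, $Y$ the matrix with columns $y\in\mathcal Y$, $\varepsilon>0$, and $\mathbf Z$ a centred random variable on $\mathbb R^d$ whose distribution belongs to an exponential family with positive density (typically standard multivariate normal). Define $F_{\varepsilon,\mathcal C}(\theta)=\mathbb E[\max_{y\in\mathcal Y}(\theta+\varepsilon\mathbf Z)^\top y]$ for $\theta\in\mathbb R^d$ and $F_{\varepsilon,\Delta}(s)=\mathbb E[\max_{y\in\mathcal Y}s(y)+\varepsilon\mathbf Z^\top y]$ for $s\in\mathbb R^{\mathcal Y}$, and let $\Omega_{\varepsilon,\mathcal C}=F^*_{\varepsilon,\mathcal C}$ and $\Omega_{\varepsilon,\Delta}=F^*_{\varepsilon,\Delta}$ be their Fenchel conjugates. Then for every $\mu\in\mathbb R^d$, $$\Omega_{\varepsilon,\mathcal C}(\mu)=\inf\{\Omega_{\varepsilon,\Delta}(q): q\in\mathbb R^{\mathcal Y},\ Yq=\mu\}.$$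
   Context: $\mathbb R^{\mathcal Y}$ denotes vectors indexed by $\mathcal Y$ with components $s(y)$; the infimum over an empty set is $+\infty$. *)

theory Defs
  imports "HOL-Probability.Probability"
begin

definition F_C :: "'a measure \<Rightarrow> ('a \<Rightarrow> real^'d) \<Rightarrow> real \<Rightarrow> (real^'d) set \<Rightarrow> real^'d \<Rightarrow> real" where
  "F_C M Z eps Ys \<theta> = prob_space.expectation M (\<lambda>\<omega>. Max ((\<lambda>y. (\<theta> + eps *\<^sub>R Z \<omega>) \<bullet> y) ` Ys))"

text \<open>Perturbed max over the simplex: F_{eps,Delta}(s) = E[max_{y in Y} s(y) + eps Z^T y],
  with s in R^Y represented as a function on (real^'d) (values outside Y are irrelevant).\<close>
definition F_Delta :: "'a measure \<Rightarrow> ('a \<Rightarrow> real^'d) \<Rightarrow> real \<Rightarrow> (real^'d) set \<Rightarrow> (real^'d \<Rightarrow> real) \<Rightarrow> real" where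
  "F_Delta M Z eps Ys s = prob_space.expectation M (\<lambda>\<omega>. Max ((\<lambda>y. s y + eps * (Z \<omega> \<bullet> y)) ` Ys))"

definition conj_vec :: "(real^'d \<Rightarrow> real) \<Rightarrow> real^'d \<Rightarrow> ereal" where
  "conj_vec F \<mu> = (SUP \<theta>. ereal (\<theta> \<bullet> \<mu> - F \<theta>))"

definition conj_fun :: "(real^'d) set \<Rightarrow> ((real^'d \<Rightarrow> real) \<Rightarrow> real) \<Rightarrow> (real^'d \<Rightarrow> real) \<Rightarrow> ereal" where
  "conj_fun Ys G q = (SUP s. ereal ((\<Sum>y\<in>Ys. s y * q y) - G s))"

definition Ymat :: "(real^'d) set \<Rightarrow> (real^'d \<Rightarrow> real) \<Rightarrow> real^'d" where
  "Ymat Ys q = (\<Sum>y\<in>Ys. q y *\<^sub>R y)"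

end

(*
  With r theta = (y |-> theta . y), the adjoint of Y, we have F_C = F_Delta o r, and
  Omega_C(mu) <= Omega_Delta(q) whenever Y q = mu because theta . Y q = <r theta, q>.
  Conversely, if Omega_C(mu) = v is finite, the functional r theta |-> theta . mu on the range of r
  is dominated by F_Delta + v.  As F_Delta is convex, the one-dimensional Hahn-Banach step extends
  it, still dominated, to the indicators of the points of Y; its values there form a q with
  Omega_Delta(q) <= v, and Y q = mu because F_Delta only depends on values on Y.
*)
theory Submission
  imports Defs "HOL-Library.Function_Algebras"
begin

section \<open>Extension of dominated linear functionals\<close>

definition linear_functional_on :: "'a::real_vector set \<Rightarrow> ('a \<Rightarrow> real) \<Rightarrow> bool" where
  "linear_functional_on L \<phi> \<longleftrightarrow> subspace L \<and>
     (\<forall>x\<in>L. \<forall>y\<in>L. \<phi> (x + y) = \<phi> x + \<phi> y) \<and> (\<forall>x\<in>L. \<forall>c. \<phi> (c *\<^sub>R x) = c * \<phi> x)"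

lemma linear_functional_onD:
  assumes "linear_functional_on L \<phi>"
  shows "subspace L" and "x \<in> L \<Longrightarrow> y \<in> L \<Longrightarrow> \<phi> (x + y) = \<phi> x + \<phi> y"
    and "x \<in> L \<Longrightarrow> \<phi> (c *\<^sub>R x) = c * \<phi> x"
  using assms by (auto simp: linear_functional_on_def)

lemma linear_functional_on_0:
  assumes "linear_functional_on L \<psi>"
  shows "\<psi> 0 = 0"
  using linear_functional_onD(3)[OF assms subspace_0[OF linear_functional_onD(1)[OF assms]], of 0]
  by simp

lemma linear_functional_on_sum:
  assumes \<psi>: "linear_functional_on L \<psi>" and "\<forall>i\<in>I. f i \<in> L"
  shows "\<psi> (\<Sum>i\<in>I. f i) = (\<Sum>i\<in>I. \<psi> (f i))"
  using assms(2)
proof (induction I rule: infinite_finite_induct)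
  case (infinite I)
  then show ?case by (simp add: linear_functional_on_0[OF \<psi>])
next
  case empty
  then show ?case by (simp add: linear_functional_on_0[OF \<psi>])
next
  case (insert i I)
  have "f i \<in> L" "sum f I \<in> L"
    using insert.prems by (auto intro: subspace_sum[OF linear_functional_onD(1)[OF \<psi>]])
  then have "\<psi> (f i + sum f I) = \<psi> (f i) + \<psi> (sum f I)"
    by (rule linear_functional_onD(2)[OF \<psi>])
  then show ?case using insert by simp
qed

lemma linear_functional_on_sum_scaleR:
  assumes \<psi>: "linear_functional_on L \<psi>" and "\<forall>i\<in>I. x i \<in> L"
  shows "\<psi> (\<Sum>i\<in>I. c i *\<^sub>R x i) = (\<Sum>i\<in>I. c i * \<psi> (x i))"
  using assms linear_functional_on_sum[OF \<psi>, of I "\<lambda>i. c i *\<^sub>R x i"]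
    subspace_scale[OF linear_functional_onD(1)[OF \<psi>]]
  by (simp add: linear_functional_onD(3)[OF \<psi>])

lemma dominated_extension_lower_le_upper:
  assumes G: "convex_on UNIV G" and \<phi>: "linear_functional_on L \<phi>" and dom: "\<forall>x\<in>L. \<phi> x \<le> G x"
    and t: "t\<^sub>1 \<in> L" "t\<^sub>2 \<in> L" and c: "c\<^sub>1 > 0" "c\<^sub>2 > 0"
  shows "(\<phi> t\<^sub>1 - G (t\<^sub>1 - c\<^sub>1 *\<^sub>R e)) / c\<^sub>1 \<le> (G (t\<^sub>2 + c\<^sub>2 *\<^sub>R e) - \<phi> t\<^sub>2) / c\<^sub>2"
proof -
  define u where "u = c\<^sub>2 / (c\<^sub>1 + c\<^sub>2)"
  define v where "v = c\<^sub>1 / (c\<^sub>1 + c\<^sub>2)"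
  have uv: "u \<ge> 0" "v \<ge> 0" "u + v = 1" "u * c\<^sub>1 = v * c\<^sub>2"
    using c by (simp_all add: u_def v_def add_divide_distrib[symmetric])
  define w where "w = u *\<^sub>R t\<^sub>1 + v *\<^sub>R t\<^sub>2"
  have L: "subspace L" by (rule linear_functional_onD(1)[OF \<phi>])
  then have "w \<in> L" using t by (simp add: w_def subspace_add subspace_scale)
  have "u * \<phi> t\<^sub>1 + v * \<phi> t\<^sub>2 = \<phi> w"
    using t L by (simp add: w_def subspace_scale linear_functional_onD[OF \<phi>])
  also have "\<dots> \<le> G w" using dom \<open>w \<in> L\<close> by blast
  also have "w = u *\<^sub>R (t\<^sub>1 - c\<^sub>1 *\<^sub>R e) + v *\<^sub>R (t\<^sub>2 + c\<^sub>2 *\<^sub>R e)"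
    using uv by (simp add: w_def algebra_simps)
  also have "G \<dots> \<le> u * G (t\<^sub>1 - c\<^sub>1 *\<^sub>R e) + v * G (t\<^sub>2 + c\<^sub>2 *\<^sub>R e)"
    using G uv by (simp add: convex_on_def)
  finally have "u * \<phi> t\<^sub>1 + v * \<phi> t\<^sub>2 \<le> u * G (t\<^sub>1 - c\<^sub>1 *\<^sub>R e) + v * G (t\<^sub>2 + c\<^sub>2 *\<^sub>R e)" .
  moreover have "(c\<^sub>1 + c\<^sub>2) * (u * a + v * b) = c\<^sub>2 * a + c\<^sub>1 * b" for a b
  proof -
    have "(c\<^sub>1 + c\<^sub>2) * u = c\<^sub>2" "(c\<^sub>1 + c\<^sub>2) * v = c\<^sub>1"
      using c by (simp_all add: u_def v_def)
    then show ?thesis by (metis distrib_left mult.assoc)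
  qed
  ultimately have "c\<^sub>2 * \<phi> t\<^sub>1 + c\<^sub>1 * \<phi> t\<^sub>2 \<le> c\<^sub>2 * G (t\<^sub>1 - c\<^sub>1 *\<^sub>R e) + c\<^sub>1 * G (t\<^sub>2 + c\<^sub>2 *\<^sub>R e)"
    using c by (metis add_pos_pos mult_le_cancel_left_pos)
  then show ?thesis
    using c by (simp add: field_simps)
qed

lemma dominated_extension_constant:
  assumes G: "convex_on UNIV G" and \<phi>: "linear_functional_on L \<phi>" and dom: "\<forall>x\<in>L. \<phi> x \<le> G x"
  obtains \<alpha> where "\<And>t c. t \<in> L \<Longrightarrow> \<phi> t + c * \<alpha> \<le> G (t + c *\<^sub>R e)"
proof -
  have "0 \<in> L" using linear_functional_onD(1)[OF \<phi>] by (rule subspace_0)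
  define lower where "lower = {(\<phi> t - G (t - c *\<^sub>R e)) / c | t c. t \<in> L \<and> c > 0}"
  define \<alpha> where "\<alpha> = Sup lower"
  have upper: "\<alpha> \<le> (G (t + c *\<^sub>R e) - \<phi> t) / c" if "t \<in> L" "c > 0" for t c
    unfolding \<alpha>_def
  proof (rule cSup_least)
    show "lower \<noteq> {}" unfolding lower_def using \<open>0 \<in> L\<close> zero_less_one by blast
    show "l \<le> (G (t + c *\<^sub>R e) - \<phi> t) / c" if "l \<in> lower" for l
      using that dominated_extension_lower_le_upper[OF G \<phi> dom _ \<open>t \<in> L\<close> _ \<open>c > 0\<close>]
      by (auto simp: lower_def)
  qed
  have "bdd_above lower"
    using dominated_extension_lower_le_upper[OF G \<phi> dom _ \<open>0 \<in> L\<close> _ zero_less_one]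
    by (auto simp: lower_def bdd_above_def)
  then have lower: "(\<phi> t - G (t - c *\<^sub>R e)) / c \<le> \<alpha>" if "t \<in> L" "c > 0" for t c
    unfolding \<alpha>_def using that by (intro cSup_upper) (auto simp: lower_def)
  have "\<phi> t + c * \<alpha> \<le> G (t + c *\<^sub>R e)" if "t \<in> L" for t c
  proof (cases c "0::real" rule: linorder_cases)
    case less
    then show ?thesis using lower[OF that, of "- c"] by (simp add: field_simps)
  next
    case equal
    then show ?thesis using dom that by simp
  next
    case greater
    then show ?thesis using upper[OF that greater] by (simp add: field_simps)
  qed
  then show ?thesis using that by blast
qed

lemma span_insert_subspace:
  assumes "subspace L"
  shows "span (insert e L) = {t + c *\<^sub>R e | t c. t \<in> L}"
proof -
  have "span L = L" using assms by simp
  then have "x \<in> span (insert e L) \<longleftrightarrow> x \<in> {t + c *\<^sub>R e | t c. t \<in> L}" for x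
    unfolding span_insert mem_Collect_eq by (metis add_diff_cancel diff_add_cancel)
  then show ?thesis by blast
qed

lemma subspace_add_scaleR_unique:
  assumes L: "subspace L" and e: "e \<notin> L" and t: "t \<in> L" "t' \<in> L"
    and eq: "t + c *\<^sub>R e = t' + c' *\<^sub>R e"
  shows "t = t' \<and> c = c'"
proof -
  have diff: "(c - c') *\<^sub>R e = t' - t" using eq by (simp add: algebra_simps)
  have "c = c'"
  proof (rule ccontr)
    assume "c \<noteq> c'"
    then have "e = inverse (c - c') *\<^sub>R (t' - t)" unfolding diff[symmetric] by simp
    also have "\<dots> \<in> L" using L t by (simp add: subspace_diff subspace_scale)
    finally show False using e by contradiction
  qed
  then show ?thesis using eq by simp
qed

lemma linear_functional_on_span_insert:
  assumes \<phi>: "linear_functional_on L \<phi>" and e: "e \<notin> L"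
  obtains \<psi> where "linear_functional_on (span (insert e L)) \<psi>"
    and "\<And>t c. t \<in> L \<Longrightarrow> \<psi> (t + c *\<^sub>R e) = \<phi> t + c * \<alpha>"
proof
  have L: "subspace L" by (rule linear_functional_onD(1)[OF \<phi>])
  define \<psi> where "\<psi> x = (THE r. \<exists>t\<in>L. \<exists>c. x = t + c *\<^sub>R e \<and> r = \<phi> t + c * \<alpha>)" for x
  show \<psi>: "\<psi> (t + c *\<^sub>R e) = \<phi> t + c * \<alpha>" if t: "t \<in> L" for t c
    unfolding \<psi>_def
    using t subspace_add_scaleR_unique[OF L e t] by (intro the_equality) blast+
  have span: "span (insert e L) = {t + c *\<^sub>R e | t c. t \<in> L}"
    by (rule span_insert_subspace[OF L])
  show "linear_functional_on (span (insert e L)) \<psi>"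
    unfolding linear_functional_on_def
  proof (intro conjI ballI allI)
    show "subspace (span (insert e L))" by (rule subspace_span)
  next
    fix x y assume "x \<in> span (insert e L)" "y \<in> span (insert e L)"
    then obtain t c t' c' where t: "t \<in> L" "t' \<in> L" and xy: "x = t + c *\<^sub>R e" "y = t' + c' *\<^sub>R e"
      unfolding span by blast
    have "\<psi> (x + y) = \<psi> ((t + t') + (c + c') *\<^sub>R e)"
      using xy by (simp add: algebra_simps)
    also have "\<dots> = \<phi> (t + t') + (c + c') * \<alpha>"
      using L t by (simp add: \<psi> subspace_add)
    also have "\<dots> = \<psi> x + \<psi> y"
      using t xy by (simp add: \<psi> linear_functional_onD(2)[OF \<phi>] algebra_simps)
    finally show "\<psi> (x + y) = \<psi> x + \<psi> y" .
  next
    fix x a assume "x \<in> span (insert e L)"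
    then obtain t c where t: "t \<in> L" and x: "x = t + c *\<^sub>R e"
      unfolding span by blast
    have "\<psi> (a *\<^sub>R x) = \<psi> (a *\<^sub>R t + (a * c) *\<^sub>R e)"
      using x by (simp add: algebra_simps)
    also have "\<dots> = \<phi> (a *\<^sub>R t) + (a * c) * \<alpha>"
      using L t by (simp add: \<psi> subspace_scale)
    also have "\<dots> = a * \<psi> x"
      using t x by (simp add: \<psi> linear_functional_onD(3)[OF \<phi>] algebra_simps)
    finally show "\<psi> (a *\<^sub>R x) = a * \<psi> x" .
  qed
qed

lemma dominated_extension_step:
  assumes G: "convex_on UNIV G" and \<phi>: "linear_functional_on L \<phi>" and dom: "\<forall>x\<in>L. \<phi> x \<le> G x"
  obtains \<psi> where "linear_functional_on (span (insert e L)) \<psi>"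
    and "\<forall>x\<in>span (insert e L). \<psi> x \<le> G x" and "\<forall>x\<in>L. \<psi> x = \<phi> x"
proof (cases "e \<in> L")
  case True
  then have "span (insert e L) = L"
    using linear_functional_onD(1)[OF \<phi>] by (simp add: insert_absorb)
  then show ?thesis using that \<phi> dom by simp
next
  case False
  obtain \<alpha> where \<alpha>: "\<And>t c. t \<in> L \<Longrightarrow> \<phi> t + c * \<alpha> \<le> G (t + c *\<^sub>R e)"
    using dominated_extension_constant[OF G \<phi> dom] by blast
  obtain \<psi> where \<psi>: "linear_functional_on (span (insert e L)) \<psi>"
    and \<psi>_eq: "\<And>t c. t \<in> L \<Longrightarrow> \<psi> (t + c *\<^sub>R e) = \<phi> t + c * \<alpha>"
    using linear_functional_on_span_insert[OF \<phi> False] by blast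
  have "span (insert e L) = {t + c *\<^sub>R e | t c. t \<in> L}"
    by (rule span_insert_subspace[OF linear_functional_onD(1)[OF \<phi>]])
  then have "\<forall>x\<in>span (insert e L). \<psi> x \<le> G x"
    using \<psi>_eq \<alpha> by auto
  moreover have "\<forall>x\<in>L. \<psi> x = \<phi> x"
    using \<psi>_eq[of _ 0] by simp
  ultimately show ?thesis using that \<psi> by blast
qed

lemma dominated_extension_finite:
  assumes E: "finite E" and G: "convex_on UNIV G"
    and \<phi>: "linear_functional_on L \<phi>" and dom: "\<forall>x\<in>L. \<phi> x \<le> G x"
  shows "\<exists>\<psi>. linear_functional_on (span (L \<union> E)) \<psi> \<and> (\<forall>x\<in>span (L \<union> E). \<psi> x \<le> G x)
    \<and> (\<forall>x\<in>L. \<psi> x = \<phi> x)"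
  using E
proof (induction E rule: finite_induct)
  case empty
  have "span (L \<union> {}) = L" using linear_functional_onD(1)[OF \<phi>] by simp
  show ?case unfolding \<open>span (L \<union> {}) = L\<close> using \<phi> dom by blast
next
  case (insert e E)
  then obtain \<psi> where \<psi>: "linear_functional_on (span (L \<union> E)) \<psi>"
    "\<forall>x\<in>span (L \<union> E). \<psi> x \<le> G x" "\<forall>x\<in>L. \<psi> x = \<phi> x"
    by blast
  obtain \<psi>' where "linear_functional_on (span (insert e (span (L \<union> E)))) \<psi>'"
    "\<forall>x\<in>span (insert e (span (L \<union> E))). \<psi>' x \<le> G x" "\<forall>x\<in>span (L \<union> E). \<psi>' x = \<psi> x"
    by (rule dominated_extension_step[OF G \<psi>(1,2)])
  moreover have "span (insert e (span (L \<union> E))) = span (L \<union> insert e E)"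
    by (simp add: span_insert span_span)
  moreover have "L \<subseteq> span (L \<union> E)" by (meson le_supE span_superset)
  ultimately show ?case using \<psi>(3) by (metis subsetD)
qed

lemma dominated_linear_functional_eq_0:
  assumes \<psi>: "linear_functional_on L \<psi>" and dom: "\<forall>x\<in>L. \<psi> x \<le> H x"
    and w: "w \<in> L" and bounded: "\<And>c. H (c *\<^sub>R w) \<le> B"
  shows "\<psi> w = 0"
proof (rule ccontr)
  assume "\<psi> w \<noteq> 0"
  define c where "c = (\<bar>B\<bar> + 1) / \<psi> w"
  have "\<bar>B\<bar> + 1 = \<psi> (c *\<^sub>R w)"
    using \<open>\<psi> w \<noteq> 0\<close> by (simp add: c_def linear_functional_onD(3)[OF \<psi> w])
  also have "\<dots> \<le> H (c *\<^sub>R w)"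
    using dom w subspace_scale[OF linear_functional_onD(1)[OF \<psi>]] by blast
  also have "\<dots> \<le> B" by (rule bounded)
  finally show False by linarith
qed

section \<open>Conjugate of a convex function composed with the adjoint of Y\<close>

instantiation "fun" :: (type, real_vector) real_vector
begin
definition scaleR_fun :: "real \<Rightarrow> ('a \<Rightarrow> 'b) \<Rightarrow> 'a \<Rightarrow> 'b" where
  "scaleR_fun c f = (\<lambda>x. c *\<^sub>R f x)"
instance by standard (simp_all add: scaleR_fun_def fun_eq_iff scaleR_add_right scaleR_add_left)
end

lemma sum_fun_apply: "(\<Sum>i\<in>I. f i) x = (\<Sum>i\<in>I. f i x)"
  by (induction I rule: infinite_finite_induct) auto

lemma sum_scaleR_indicator_apply:
  fixes s :: "'a \<Rightarrow> real"
  assumes "finite Ys" "y \<in> Ys"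
  shows "(\<Sum>y'\<in>Ys. s y' *\<^sub>R indicator {y'}) y = s y"
  using assms by (simp add: sum_fun_apply scaleR_fun_def indicator_def)

lemma inner_Ymat: "\<theta> \<bullet> Ymat Ys q = (\<Sum>y\<in>Ys. (\<theta> \<bullet> y) * q y)"
  unfolding Ymat_def by (simp add: inner_sum_right mult.commute)

lemma dominated_extension_of_inner:
  fixes G :: "('v::real_inner \<Rightarrow> real) \<Rightarrow> real"
  assumes E: "finite E" and G: "convex_on UNIV G" and dom: "\<And>\<theta>. \<theta> \<bullet> \<mu> \<le> G (\<lambda>y. \<theta> \<bullet> y)"
  obtains \<psi> where "linear_functional_on (span (range (\<lambda>\<theta> y. \<theta> \<bullet> y) \<union> E)) \<psi>"
    and "\<forall>x\<in>span (range (\<lambda>\<theta> y. \<theta> \<bullet> y) \<union> E). \<psi> x \<le> G x"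
    and "\<And>\<theta>. \<psi> (\<lambda>y. \<theta> \<bullet> y) = \<theta> \<bullet> \<mu>"
proof -
  define r :: "'v \<Rightarrow> 'v \<Rightarrow> real" where "r \<theta> = (\<lambda>y. \<theta> \<bullet> y)" for \<theta>
  have "linear r"
    by (rule linearI) (simp_all add: r_def fun_eq_iff scaleR_fun_def inner_add_left)
  have "inj r"
    unfolding inj_def r_def by (metis vector_eq_rdot)
  define \<phi> where "\<phi> w = inv r w \<bullet> \<mu>" for w
  have \<phi>r: "\<phi> (r \<theta>) = \<theta> \<bullet> \<mu>" for \<theta>
    using \<open>inj r\<close> by (simp add: \<phi>_def)
  have "linear_functional_on (range r) \<phi>"
    unfolding linear_functional_on_def
  proof (intro conjI ballI allI)
    show "subspace (range r)" using \<open>linear r\<close> by (simp add: linear_subspace_image)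
  next
    fix x y assume "x \<in> range r" "y \<in> range r"
    then show "\<phi> (x + y) = \<phi> x + \<phi> y"
      by (auto simp: \<phi>r linear_add[OF \<open>linear r\<close>, symmetric] inner_add_left)
  next
    fix x c assume "x \<in> range r"
    then show "\<phi> (c *\<^sub>R x) = c * \<phi> x"
      by (auto simp: \<phi>r linear_scale[OF \<open>linear r\<close>, symmetric])
  qed
  moreover have "\<phi> (r \<theta>) \<le> G (r \<theta>)" for \<theta>
    unfolding \<phi>r using dom by (simp add: r_def)
  ultimately obtain \<psi> where "linear_functional_on (span (range r \<union> E)) \<psi>"
    "\<forall>x\<in>span (range r \<union> E). \<psi> x \<le> G x" "\<forall>x\<in>range r. \<psi> x = \<phi> x"
    using dominated_extension_finite[OF E G] by blast
  then show ?thesis using that \<phi>r unfolding r_def by auto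
qed

lemma exists_Ymat_conj_fun_bound:
  fixes G :: "(real^'d \<Rightarrow> real) \<Rightarrow> real"
  assumes Ys: "finite Ys" and G: "convex_on UNIV G"
    and local: "\<And>s s'. (\<And>y. y \<in> Ys \<Longrightarrow> s y = s' y) \<Longrightarrow> G s = G s'"
    and bound: "\<And>\<theta>. \<theta> \<bullet> \<mu> - G (\<lambda>y. \<theta> \<bullet> y) \<le> v"
  obtains q where "Ymat Ys q = \<mu>" and "\<And>s. (\<Sum>y\<in>Ys. s y * q y) - G s \<le> v"
proof -
  define W where "W = span (range (\<lambda>\<theta> y. \<theta> \<bullet> y) \<union> (\<lambda>y. indicator {y}) ` Ys)"
  have "convex_on UNIV (\<lambda>s. G s + v)" using G by (simp add: convex_on_add convex_on_const)
  moreover have "\<theta> \<bullet> \<mu> \<le> G (\<lambda>y. \<theta> \<bullet> y) + v" for \<theta> using bound[of \<theta>] by simp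
  ultimately obtain \<psi> where \<psi>: "linear_functional_on W \<psi>" and dom: "\<forall>x\<in>W. \<psi> x \<le> G x + v"
    and \<psi>_inner: "\<And>\<theta>. \<psi> (\<lambda>y. \<theta> \<bullet> y) = \<theta> \<bullet> \<mu>"
    unfolding W_def by (rule dominated_extension_of_inner[OF finite_imageI[OF Ys, of "\<lambda>y. indicator {y}"]]) blast
  define q where "q y = \<psi> (indicator {y})" for y
  define restr :: "(real^'d \<Rightarrow> real) \<Rightarrow> real^'d \<Rightarrow> real"
    where "restr s = (\<Sum>y\<in>Ys. s y *\<^sub>R indicator {y})" for s
  have restr_W: "restr s \<in> W" for s
    unfolding restr_def W_def by (intro span_sum span_scale span_base) auto
  have \<psi>_restr: "\<psi> (restr s) = (\<Sum>y\<in>Ys. s y * q y)" for s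
    unfolding restr_def q_def W_def
    by (rule linear_functional_on_sum_scaleR[OF \<psi>[unfolded W_def]]) (auto intro: span_base)
  have restr_apply: "restr s y = s y" if "y \<in> Ys" for s y
    unfolding restr_def using Ys that by (rule sum_scaleR_indicator_apply)
  have G_restr: "G (restr s) = G s" for s
    by (rule local) (rule restr_apply)
  show ?thesis
  proof
    show "(\<Sum>y\<in>Ys. s y * q y) - G s \<le> v" for s
    proof -
      have "\<psi> (restr s) \<le> G (restr s) + v" using dom restr_W by blast
      then show ?thesis unfolding \<psi>_restr G_restr by simp
    qed
    have "\<theta> \<bullet> Ymat Ys q = \<theta> \<bullet> \<mu>" for \<theta>
    proof -
      define t where "t = (\<lambda>y. \<theta> \<bullet> y)"
      have "t \<in> W" unfolding t_def W_def by (intro span_base) auto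
      then have diff_W: "t - restr t \<in> W" using restr_W by (simp add: W_def span_diff)
      txt \<open>\<open>t - restr t\<close> vanishes on \<open>Ys\<close>, so \<open>G\<close> is constant on its multiples and the
        dominated \<open>\<psi>\<close> must vanish on it.\<close>
      have "G (c *\<^sub>R (t - restr t)) + v \<le> G 0 + v" for c
        using local[of "c *\<^sub>R (t - restr t)" 0] by (simp add: scaleR_fun_def restr_apply)
      then have "\<psi> (t - restr t) = 0"
        by (rule dominated_linear_functional_eq_0[OF \<psi> dom diff_W])
      then have "\<psi> t = \<psi> (restr t)"
        using linear_functional_onD(2)[OF \<psi> diff_W restr_W[of t]] by simp
      then show ?thesis by (simp add: inner_Ymat \<psi>_restr t_def \<psi>_inner)
    qed
    then show "Ymat Ys q = \<mu>" by (metis vector_eq_ldot)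
  qed
qed

lemma conj_vec_comp_inner_eq_INF_conj_fun:
  fixes G :: "(real^'d \<Rightarrow> real) \<Rightarrow> real"
  assumes Ys: "finite Ys" and G: "convex_on UNIV G"
    and local: "\<And>s s'. (\<And>y. y \<in> Ys \<Longrightarrow> s y = s' y) \<Longrightarrow> G s = G s'"
  shows "conj_vec (\<lambda>\<theta>. G (\<lambda>y. \<theta> \<bullet> y)) \<mu> = (INF q \<in> {q. Ymat Ys q = \<mu>}. conj_fun Ys G q)"
proof (rule antisym)
  show "conj_vec (\<lambda>\<theta>. G (\<lambda>y. \<theta> \<bullet> y)) \<mu> \<le> (INF q \<in> {q. Ymat Ys q = \<mu>}. conj_fun Ys G q)"
    unfolding conj_vec_def conj_fun_def
  proof (intro INF_greatest SUP_least)
    fix q \<theta> assume "q \<in> {q. Ymat Ys q = \<mu>}"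
    then have "\<theta> \<bullet> \<mu> = (\<Sum>y\<in>Ys. (\<theta> \<bullet> y) * q y)" by (simp add: inner_Ymat[symmetric])
    then show "ereal (\<theta> \<bullet> \<mu> - G (\<lambda>y. \<theta> \<bullet> y)) \<le> (SUP s. ereal ((\<Sum>y\<in>Ys. s y * q y) - G s))"
      by (intro SUP_upper2[of "\<lambda>y. \<theta> \<bullet> y"]) simp_all
  qed
  show "(INF q \<in> {q. Ymat Ys q = \<mu>}. conj_fun Ys G q) \<le> conj_vec (\<lambda>\<theta>. G (\<lambda>y. \<theta> \<bullet> y)) \<mu>"
  proof (cases "conj_vec (\<lambda>\<theta>. G (\<lambda>y. \<theta> \<bullet> y)) \<mu>")
    case (real v)
    have "\<theta> \<bullet> \<mu> - G (\<lambda>y. \<theta> \<bullet> y) \<le> v" for \<theta>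
      using real SUP_upper[of \<theta> UNIV "\<lambda>\<theta>. ereal (\<theta> \<bullet> \<mu> - G (\<lambda>y. \<theta> \<bullet> y))"]
      by (simp add: conj_vec_def)
    then obtain q where "Ymat Ys q = \<mu>" "\<And>s. (\<Sum>y\<in>Ys. s y * q y) - G s \<le> v"
      using exists_Ymat_conj_fun_bound[OF Ys G local] by blast
    then have "(INF q \<in> {q. Ymat Ys q = \<mu>}. conj_fun Ys G q) \<le> conj_fun Ys G q"
      and "conj_fun Ys G q \<le> v"
      by (auto simp: conj_fun_def intro: INF_lower SUP_least)
    then show ?thesis using real by simp
  next
    case MInf
    moreover have "ereal (0 \<bullet> \<mu> - G (\<lambda>y. 0 \<bullet> y)) \<le> conj_vec (\<lambda>\<theta>. G (\<lambda>y. \<theta> \<bullet> y)) \<mu>"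
      unfolding conj_vec_def by (rule SUP_upper) simp
    ultimately show ?thesis by simp
  qed simp
qed

section \<open>Convexity of the perturbed maximum\<close>

lemma integrable_Max:
  fixes f :: "'i \<Rightarrow> 'a \<Rightarrow> real"
  assumes "finite I" "I \<noteq> {}" "\<And>i. i \<in> I \<Longrightarrow> integrable M (f i)"
  shows "integrable M (\<lambda>\<omega>. Max ((\<lambda>i. f i \<omega>) ` I))"
  using assms by (induction I rule: finite_ne_induct) simp_all

lemma convex_on_Max:
  assumes I: "finite I" "I \<noteq> {}" and f: "\<And>i. i \<in> I \<Longrightarrow> convex_on S (f i)"
  shows "convex_on S (\<lambda>x. Max ((\<lambda>i. f i x) ` I))"
proof -
  have "convex S" using I f by (auto simp: convex_on_def)
  moreover have "Max ((\<lambda>i. f i (u *\<^sub>R x + v *\<^sub>R y)) ` I)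
      \<le> u * Max ((\<lambda>i. f i x) ` I) + v * Max ((\<lambda>i. f i y) ` I)"
    if "x \<in> S" "y \<in> S" "u \<ge> 0" "v \<ge> 0" "u + v = 1" for x y u v
  proof (subst Max_le_iff, use I in simp_all, intro ballI)
    fix i assume "i \<in> I"
    then have "f i (u *\<^sub>R x + v *\<^sub>R y) \<le> u * f i x + v * f i y"
      using f that by (simp add: convex_on_def)
    also have "\<dots> \<le> u * Max ((\<lambda>i. f i x) ` I) + v * Max ((\<lambda>i. f i y) ` I)"
      using \<open>i \<in> I\<close> I that by (intro add_mono mult_left_mono) simp_all
    finally show "f i (u *\<^sub>R x + v *\<^sub>R y) \<le> u * Max ((\<lambda>i. f i x) ` I) + v * Max ((\<lambda>i. f i y) ` I)" .
  qed
  ultimately show ?thesis unfolding convex_on_def by blast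
qed

lemma convex_on_integral:
  fixes f :: "'b::real_vector \<Rightarrow> 'a \<Rightarrow> real"
  assumes f: "\<And>\<omega>. convex_on S (\<lambda>x. f x \<omega>)" and int: "\<And>x. x \<in> S \<Longrightarrow> integrable M (f x)"
  shows "convex_on S (\<lambda>x. integral\<^sup>L M (f x))"
proof -
  have "convex S" using f by (auto simp: convex_on_def)
  moreover have "integral\<^sup>L M (f (u *\<^sub>R x + v *\<^sub>R y)) \<le> u * integral\<^sup>L M (f x) + v * integral\<^sup>L M (f y)"
    if "x \<in> S" "y \<in> S" "u \<ge> 0" "v \<ge> 0" "u + v = 1" for x y u v
  proof -
    have "u *\<^sub>R x + v *\<^sub>R y \<in> S" using \<open>convex S\<close> that by (simp add: convex_def)
    then have "integral\<^sup>L M (f (u *\<^sub>R x + v *\<^sub>R y)) \<le> integral\<^sup>L M (\<lambda>\<omega>. u * f x \<omega> + v * f y \<omega>)"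
      using f that int by (intro integral_mono) (auto simp: convex_on_def)
    also have "\<dots> = u * integral\<^sup>L M (f x) + v * integral\<^sup>L M (f y)"
      using int that by simp
    finally show ?thesis .
  qed
  ultimately show ?thesis unfolding convex_on_def by blast
qed

lemma F_C_eq_F_Delta_inner: "F_C M Z eps Ys \<theta> = F_Delta M Z eps Ys (\<lambda>y. \<theta> \<bullet> y)"
  unfolding F_C_def F_Delta_def by (simp add: inner_add_left)

lemma F_Delta_cong:
  assumes "\<And>y. y \<in> Ys \<Longrightarrow> s y = s' y"
  shows "F_Delta M Z eps Ys s = F_Delta M Z eps Ys s'"
  unfolding F_Delta_def using assms by (simp cong: image_cong)

lemma convex_on_F_Delta:
  assumes "prob_space M" "integrable M Z" "finite Ys" "Ys \<noteq> {}"
  shows "convex_on UNIV (F_Delta M Z eps Ys)"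
proof -
  interpret prob_space M by (rule assms(1))
  have affine: "convex_on UNIV (\<lambda>s. s y + eps * (Z \<omega> \<bullet> y))" for y \<omega>
    by (rule convex_onI) (simp_all add: scaleR_fun_def algebra_simps)
  have "convex_on UNIV (\<lambda>s. Max ((\<lambda>y. s y + eps * (Z \<omega> \<bullet> y)) ` Ys))" for \<omega>
    using assms(3,4) affine by (rule convex_on_Max)
  moreover have "integrable M (\<lambda>\<omega>. Max ((\<lambda>y. s y + eps * (Z \<omega> \<bullet> y)) ` Ys))" for s
    using assms(2-4) by (intro integrable_Max) auto
  ultimately show ?thesis
    unfolding F_Delta_def by (rule convex_on_integral)
qed

theorem proposition8:
  fixes M :: "'a measure" and Z :: "'a \<Rightarrow> real^'d" and Ys :: "(real^'d) set"
    and eps :: real and f :: "real^'d \<Rightarrow> real" and \<mu> :: "real^'d"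
  assumes "finite Ys" and "Ys \<noteq> {}"
    and "\<And>y. y \<in> Ys \<Longrightarrow> y \<notin> convex hull (Ys - {y})"
    and "eps > 0"
    and "prob_space M"
    and "f \<in> borel_measurable borel" and "\<And>z. f z > 0"
    and "distributed M lborel Z (\<lambda>z. ennreal (f z))"
    and "integrable M Z"
    and "prob_space.expectation M Z = 0"
  shows "conj_vec (F_C M Z eps Ys) \<mu>
           = (INF q \<in> {q. Ymat Ys q = \<mu>}. conj_fun Ys (F_Delta M Z eps Ys) q)"
proof -
  have convex: "convex_on UNIV (F_Delta M Z eps Ys)"
    using \<open>prob_space M\<close> \<open>integrable M Z\<close> \<open>finite Ys\<close> \<open>Ys \<noteq> {}\<close> by (rule convex_on_F_Delta)
  have "F_C M Z eps Ys = (\<lambda>\<theta>. F_Delta M Z eps Ys (\<lambda>y. \<theta> \<bullet> y))"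
    by (simp add: fun_eq_iff F_C_eq_F_Delta_inner)
  moreover have "conj_vec (\<lambda>\<theta>. F_Delta M Z eps Ys (\<lambda>y. \<theta> \<bullet> y)) \<mu>
      = (INF q \<in> {q. Ymat Ys q = \<mu>}. conj_fun Ys (F_Delta M Z eps Ys) q)"
    by (rule conj_vec_comp_inner_eq_INF_conj_fun[OF \<open>finite Ys\<close> convex]) (rule F_Delta_cong)
  ultimately show ?thesis by simp
qed

end
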